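(* Let $G_1$ and $G_2$ be topological groupoids with $G_1$ proper. Suppose that $f\colon G_1\to G_2$ is a surjective continuous groupoid morphism such that the induced map $f'\colon G_1^{(0)}\to G_2^{(0)}$ is proper. Then $G_2$ is proper.
   Context: A continuous map is proper if it is closed and has quasi-compact fibres (quasi-compact: every open cover has a finite subcover). A topological groupoid $G$ is proper if $(r,s)\colon G\to G^{(0)}\times G^{(0)}$ is proper. *)

theory Defs
  imports "HOL-Analysis.Analysis"
begin

record 'a topgroupoid =
  gtop  :: "'a topology"
  units :: "'a set"
  rng   :: "'a \<Rightarrow> 'a"
  src   :: "'a \<Rightarrow> 'a"
  mult  :: "'a \<Rightarrow> 'a \<Rightarrow> 'a"
  ginv  :: "'a \<Rightarrow> 'a"

definition arrows :: "('a, 'b) topgroupoid_scheme \<Rightarrow> 'a set" where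
  "arrows G = topspace (gtop G)"

definition composable :: "('a, 'b) topgroupoid_scheme \<Rightarrow> ('a \<times> 'a) set" where
  "composable G = {(g, h). g \<in> arrows G \<and> h \<in> arrows G \<and> src G g = rng G h}"

definition groupoid :: "('a, 'b) topgroupoid_scheme \<Rightarrow> bool" where
  "groupoid G \<longleftrightarrow>
     units G \<subseteq> arrows G \<and>
     (\<forall>g \<in> arrows G. rng G g \<in> units G \<and> src G g \<in> units G) \<and>
     (\<forall>u \<in> units G. rng G u = u \<and> src G u = u) \<and>
     (\<forall>(g, h) \<in> composable G. mult G g h \<in> arrows G \<and>
        rng G (mult G g h) = rng G g \<and> src G (mult G g h) = src G h) \<and>
     (\<forall>g \<in> arrows G. \<forall>h \<in> arrows G. \<forall>k \<in> arrows G.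
        src G g = rng G h \<longrightarrow> src G h = rng G k \<longrightarrow>
        mult G (mult G g h) k = mult G g (mult G h k)) \<and>
     (\<forall>g \<in> arrows G. mult G (rng G g) g = g \<and> mult G g (src G g) = g) \<and>
     (\<forall>g \<in> arrows G. ginv G g \<in> arrows G \<and>
        rng G (ginv G g) = src G g \<and> src G (ginv G g) = rng G g \<and>
        mult G g (ginv G g) = rng G g \<and> mult G (ginv G g) g = src G g)"

definition topological_groupoid :: "('a, 'b) topgroupoid_scheme \<Rightarrow> bool" where
  "topological_groupoid G \<longleftrightarrow>
     groupoid G \<and>
     continuous_map (subtopology (prod_topology (gtop G) (gtop G)) (composable G)) (gtop G)
       (\<lambda>(g, h). mult G g h) \<and>
     continuous_map (gtop G) (gtop G) (ginv G) \<and>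
     continuous_map (gtop G) (gtop G) (rng G) \<and>
     continuous_map (gtop G) (gtop G) (src G)"

definition unit_space :: "('a, 'b) topgroupoid_scheme \<Rightarrow> 'a topology" where
  "unit_space G = subtopology (gtop G) (units G)"

definition proper_groupoid :: "('a, 'b) topgroupoid_scheme \<Rightarrow> bool" where
  "proper_groupoid G \<longleftrightarrow>
     proper_map (gtop G) (prod_topology (unit_space G) (unit_space G)) (\<lambda>g. (rng G g, src G g))"

definition groupoid_morphism ::
  "('a, 'c) topgroupoid_scheme \<Rightarrow> ('b, 'd) topgroupoid_scheme \<Rightarrow> ('a \<Rightarrow> 'b) \<Rightarrow> bool" where
  "groupoid_morphism G H f \<longleftrightarrow>
     f ` arrows G \<subseteq> arrows H \<and>
     (\<forall>g \<in> arrows G. rng H (f g) = f (rng G g) \<and> src H (f g) = f (src G g)) \<and>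
     (\<forall>(g, h) \<in> composable G. f (mult G g h) = mult H (f g) (f h))"

end

theory Submission
  imports Defs
begin

text \<open>Since f is a morphism, the anchor map (r, s) of G2 composed with f equals
  (f \<times> f) composed with the anchor map of G1. The latter is a composite of proper maps,
  hence proper, and properness of a composite passes to its left factor whenever the
  right factor is a continuous surjection.\<close>

lemma proper_map_eq:
  assumes "proper_map X Y f" and "\<And>x. x \<in> topspace X \<Longrightarrow> f x = g x"
  shows "proper_map X Y g"
proof -
  have "closed_map X Y g"
    using assms closed_map_eq proper_imp_closed_map by blast
  moreover have "{x \<in> topspace X. g x = y} = {x \<in> topspace X. f x = y}" for y
    using assms(2) by auto
  ultimately show ?thesis
    using assms(1) unfolding proper_map_def by simp
qed

lemma proper_map_descends_along_surjection:
  assumes "proper_map X Y p" and "proper_map Y Z q"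
    and "continuous_map X W f" and "f ` topspace X = topspace W"
    and "\<And>x. x \<in> topspace X \<Longrightarrow> g (f x) = q (p x)"
  shows "proper_map W Z g"
proof (rule proper_map_from_composition_left)
  show "proper_map X Z (g \<circ> f)"
    using proper_map_eq[OF proper_map_compose[OF assms(1,2)]] assms(5) by simp
qed (use assms(3,4) in auto)

lemma groupoid_morphism_anchor:
  assumes "groupoid_morphism G H f" and "g \<in> arrows G"
  shows "(rng H (f g), src H (f g)) = (f (rng G g), f (src G g))"
  using assms unfolding groupoid_morphism_def by simp

theorem proposition2p19:
  fixes G1 :: "'a topgroupoid" and G2 :: "'b topgroupoid" and f :: "'a \<Rightarrow> 'b"
  assumes "topological_groupoid G1" and "topological_groupoid G2"
    and "proper_groupoid G1"
    and "groupoid_morphism G1 G2 f"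
    and "continuous_map (gtop G1) (gtop G2) f"
    and "f ` arrows G1 = arrows G2"
    and "proper_map (unit_space G1) (unit_space G2) f"
  shows "proper_groupoid G2"
  unfolding proper_groupoid_def
proof (rule proper_map_descends_along_surjection)
  show "proper_map (gtop G1) (prod_topology (unit_space G1) (unit_space G1))
      (\<lambda>g. (rng G1 g, src G1 g))"
    using assms(3) unfolding proper_groupoid_def .
  show "proper_map (prod_topology (unit_space G1) (unit_space G1))
      (prod_topology (unit_space G2) (unit_space G2)) (\<lambda>(x, y). (f x, f y))"
    using assms(7) proper_map_prod by blast
  show "f ` topspace (gtop G1) = topspace (gtop G2)"
    using assms(6) unfolding arrows_def .
  show "(rng G2 (f g), src G2 (f g)) = (case (rng G1 g, src G1 g) of (x, y) \<Rightarrow> (f x, f y))"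
    if "g \<in> topspace (gtop G1)" for g
    using groupoid_morphism_anchor[OF assms(4)] that unfolding arrows_def by simp
qed (fact assms(5))

end
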